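(* Let $X$ be a complete CAT(0) space, $f:X\to(-\infty,\infty]$ a convex, proper, lower semicontinuous function, and $(\gamma_n)$ a sequence of positive reals. Then the family $(J_{\gamma_n})_{n\in\mathbb{N}}$ of resolvents of $f$ is jointly firmly nonexpansive with respect to $(\gamma_n)$.
   Context: A geodesic space $(X,d)$ is CAT(0) if for all $z\in X$, all geodesics $\gamma:[a,b]\to X$ and all $t\in[0,1]$, $d^2(z,\gamma((1-t)a+tb))\le(1-t)d^2(z,\gamma(a))+td^2(z,\gamma(b))-t(1-t)d^2(\gamma(a),\gamma(b))$; $(1-t)x+ty$ denotes the point at distance $t\,d(x,y)$ from $x$ on the unique geodesic from $x$ to $y$. For $\gamma>0$, the resolvent (proximal mapping) of $f$ of order $\gamma$ is $J_\gamma:X\to X$, $J_\gamma(x):=\arg\min_{y\in X}\left[f(y)+\frac1{2\gamma}d^2(x,y)\right]$ (the minimizer exists and is unique). $(T_n)$ is jointly firmly nonexpansive w.r.t. $(\gamma_n)$ if for all $n,m$, $x,y\in X$, $\alpha,\beta\in[0,1]$ with $(1-\alpha)\gamma_n=(1-\beta)\gamma_m$: $d(T_nx,T_my)\le d((1-\alpha)x+\alpha T_nx,(1-\beta)y+\beta T_my)$. *)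

theory Defs
  imports "HOL-Analysis.Analysis" "HOL-Library.Extended_Real"
begin

definition geodesic_on :: "(real \<Rightarrow> 'a::metric_space) \<Rightarrow> real \<Rightarrow> real \<Rightarrow> bool" where
  "geodesic_on g a b \<longleftrightarrow> a \<le> b \<and>
     (\<forall>s\<in>{a..b}. \<forall>t\<in>{a..b}. dist (g s) (g t) = \<bar>s - t\<bar>)"

definition geodesic_space :: "'a::metric_space itself \<Rightarrow> bool" where
  "geodesic_space _ \<longleftrightarrow>
     (\<forall>x y::'a. \<exists>g. geodesic_on g 0 (dist x y) \<and> g 0 = x \<and> g (dist x y) = y)"

definition CAT0 :: "'a::metric_space itself \<Rightarrow> bool" where
  "CAT0 T \<longleftrightarrow> geodesic_space T \<and>
     (\<forall>(z::'a) g a b t. geodesic_on g a b \<and> 0 \<le> t \<and> t \<le> 1 \<longrightarrow>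
        (dist z (g ((1 - t) * a + t * b)))\<^sup>2
          \<le> (1 - t) * (dist z (g a))\<^sup>2 + t * (dist z (g b))\<^sup>2
             - t * (1 - t) * (dist (g a) (g b))\<^sup>2)"

text \<open>(1-t)x + t y: the point at distance t d(x,y) from x on the (unique) geodesic from x to y.\<close>
definition geo_comb :: "real \<Rightarrow> 'a::metric_space \<Rightarrow> 'a \<Rightarrow> 'a" where
  "geo_comb t x y = (THE p. \<exists>g. geodesic_on g 0 (dist x y) \<and> g 0 = x \<and> g (dist x y) = y
                                 \<and> p = g (t * dist x y))"

definition geo_convex :: "('a::metric_space \<Rightarrow> ereal) \<Rightarrow> bool" where
  "geo_convex f \<longleftrightarrow> (\<forall>x y t. 0 \<le> t \<and> t \<le> 1 \<longrightarrow>
      f (geo_comb t x y) \<le> ereal (1 - t) * f x + ereal t * f y)"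

definition proper_fun :: "('a \<Rightarrow> ereal) \<Rightarrow> bool" where
  "proper_fun f \<longleftrightarrow> (\<forall>x. f x \<noteq> -\<infinity>) \<and> (\<exists>x. f x \<noteq> \<infinity>)"

definition lsc :: "('a::topological_space \<Rightarrow> ereal) \<Rightarrow> bool" where
  "lsc f \<longleftrightarrow> (\<forall>x c. c < f x \<longrightarrow> (\<forall>\<^sub>F y in nhds x. c < f y))"

definition resolvent :: "('a::metric_space \<Rightarrow> ereal) \<Rightarrow> real \<Rightarrow> 'a \<Rightarrow> 'a" where
  "resolvent f gam x = (THE y. \<forall>z. f y + ereal ((dist x y)\<^sup>2 / (2 * gam))
                                    \<le> f z + ereal ((dist x z)\<^sup>2 / (2 * gam)))"

definition jointly_firmly_nonexpansive ::
  "(nat \<Rightarrow> 'a::metric_space \<Rightarrow> 'a) \<Rightarrow> (nat \<Rightarrow> real) \<Rightarrow> bool" where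
  "jointly_firmly_nonexpansive T gam \<longleftrightarrow>
     (\<forall>n m x y \<alpha> \<beta>. 0 \<le> \<alpha> \<and> \<alpha> \<le> 1 \<and> 0 \<le> \<beta> \<and> \<beta> \<le> 1 \<and>
        (1 - \<alpha>) * gam n = (1 - \<beta>) * gam m \<longrightarrow>
        dist (T n x) (T m y) \<le> dist (geo_comb \<alpha> x (T n x)) (geo_comb \<beta> y (T m y)))"

end

theory Submission
  imports Defs
begin

text \<open>The resolvent \<open>J\<^sub>\<gamma> x\<close> is characterised by the variational inequality
  \<open>2\<gamma> (f (J\<^sub>\<gamma> x) - f z) + d(x, J\<^sub>\<gamma> x)\<^sup>2 + d(J\<^sub>\<gamma> x, z)\<^sup>2 \<le> d(x, z)\<^sup>2\<close>, obtained by comparing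
  \<open>J\<^sub>\<gamma> x\<close> with points on the geodesic towards \<open>z\<close>. Together with the triangle inequality it
  yields the resolvent identity: \<open>J\<^sub>\<gamma> x\<close> is also the resolvent of order \<open>(1 - \<alpha>)\<gamma>\<close> at
  \<open>(1 - \<alpha>)x + \<alpha> J\<^sub>\<gamma> x\<close>. Hence, when \<open>(1 - \<alpha>)\<gamma>\<^sub>n = (1 - \<beta>)\<gamma>\<^sub>m\<close>, both resolvents in the claim
  are resolvents of one common order, evaluated at the two points on the right-hand side. Adding
  the two variational inequalities and using the quadrilateral inequality of CAT(0) spaces shows
  that a resolvent of a fixed order is nonexpansive.\<close>

subsection \<open>Geodesics in CAT(0) spaces\<close>

lemma CAT0_geodesic_exists:
  assumes "CAT0 TYPE('a::metric_space)"
  shows "\<exists>g. geodesic_on g 0 (dist x y) \<and> g 0 = x \<and> g (dist x y) = (y::'a)"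
  using assms unfolding CAT0_def geodesic_space_def by blast

lemma CAT0_comparison:
  assumes "CAT0 TYPE('a::metric_space)" "geodesic_on g a b" "0 \<le> t" "t \<le> 1"
  shows "(dist (z::'a) (g ((1 - t) * a + t * b)))\<^sup>2
          \<le> (1 - t) * (dist z (g a))\<^sup>2 + t * (dist z (g b))\<^sup>2 - t * (1 - t) * (dist (g a) (g b))\<^sup>2"
  using assms unfolding CAT0_def by blast

lemma geodesic_on_dist:
  assumes "geodesic_on g a b" "s \<in> {a..b}" "t \<in> {a..b}"
  shows "dist (g s) (g t) = \<bar>s - t\<bar>"
  using assms unfolding geodesic_on_def by blast

lemma CAT0_geodesic_unique:
  assumes C: "CAT0 TYPE('a::metric_space)"
    and g1: "geodesic_on g1 0 L" "g1 0 = (x::'a)" "g1 L = y"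
    and g2: "geodesic_on g2 0 L" "g2 0 = x" "g2 L = y"
    and s: "0 \<le> s" "s \<le> L"
  shows "g1 s = g2 s"
proof (cases "L = 0")
  case True
  then show ?thesis using s g1 g2 by simp
next
  case False
  define t where "t = s / L"
  have t: "0 \<le> t" "t \<le> 1" and sL: "s = t * L" using s False by (auto simp: t_def field_simps)
  have "(dist (g2 s) (g1 s))\<^sup>2 \<le> (1 - t) * (dist (g2 s) (g1 0))\<^sup>2 + t * (dist (g2 s) (g1 L))\<^sup>2
             - t * (1 - t) * (dist (g1 0) (g1 L))\<^sup>2"
    using CAT0_comparison[OF C g1(1) t, of "g2 s"] sL by simp
  also have "\<dots> = (1 - t) * s\<^sup>2 + t * (L - s)\<^sup>2 - t * (1 - t) * L\<^sup>2"
    using geodesic_on_dist[OF g2(1), of s 0] geodesic_on_dist[OF g2(1), of s L]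
      geodesic_on_dist[OF g1(1), of 0 L] s g1(2,3) g2(2,3) by simp
  also have "\<dots> = 0" unfolding sL by algebra
  finally show ?thesis by simp
qed

lemma CAT0_geo_comb_eq:
  assumes C: "CAT0 TYPE('a::metric_space)"
    and g: "geodesic_on g 0 (dist x y)" "g 0 = (x::'a)" "g (dist x y) = y"
    and t: "0 \<le> t" "t \<le> 1"
  shows "geo_comb t x y = g (t * dist x y)"
  unfolding geo_comb_def
proof (rule the_equality)
  fix p assume "\<exists>g'. geodesic_on g' 0 (dist x y) \<and> g' 0 = x \<and> g' (dist x y) = y
                      \<and> p = g' (t * dist x y)"
  then obtain g' where g': "geodesic_on g' 0 (dist x y)" "g' 0 = x" "g' (dist x y) = y"
    and p: "p = g' (t * dist x y)" by blast
  have "0 \<le> t * dist x y" "t * dist x y \<le> dist x y" using t by (auto simp: mult_left_le_one_le)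
  then show "p = g (t * dist x y)" using CAT0_geodesic_unique[OF C g' g] p by simp
qed (use g in blast)

lemma
  assumes C: "CAT0 TYPE('a::metric_space)" and t: "0 \<le> t" "t \<le> 1"
  shows dist_geo_comb_left: "dist x (geo_comb t x y) = t * dist x (y::'a)"
    and dist_geo_comb_right: "dist (geo_comb t x y) y = (1 - t) * dist x y"
    and CAT0_geo_comb_ineq: "(dist z (geo_comb t x y))\<^sup>2
          \<le> (1 - t) * (dist z x)\<^sup>2 + t * (dist z y)\<^sup>2 - t * (1 - t) * (dist x y)\<^sup>2"
proof -
  obtain g where g: "geodesic_on g 0 (dist x y)" "g 0 = x" "g (dist x y) = y"
    using CAT0_geodesic_exists[OF C] by blast
  have e: "geo_comb t x y = g (t * dist x y)" using CAT0_geo_comb_eq[OF C g t] .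
  have r: "0 \<le> t * dist x y" "t * dist x y \<le> dist x y" using t by (auto simp: mult_left_le_one_le)
  show "dist x (geo_comb t x y) = t * dist x y"
    using geodesic_on_dist[OF g(1), of 0 "t * dist x y"] r g(2) e by simp
  show "dist (geo_comb t x y) y = (1 - t) * dist x y"
    using geodesic_on_dist[OF g(1), of "t * dist x y" "dist x y"] r g(3) e
    by (simp add: algebra_simps)
  show "(dist z (geo_comb t x y))\<^sup>2
          \<le> (1 - t) * (dist z x)\<^sup>2 + t * (dist z y)\<^sup>2 - t * (1 - t) * (dist x y)\<^sup>2"
    using CAT0_comparison[OF C g(1) t, of z] g e by simp
qed

lemma CAT0_geo_comb_one:
  assumes "CAT0 TYPE('a::metric_space)"
  shows "geo_comb 1 x y = (y::'a)"
  using dist_geo_comb_right[OF assms, of 1 x y] by simp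

lemma CAT0_quadrilateral_ineq:
  assumes C: "CAT0 TYPE('a::metric_space)"
  shows "(dist a c)\<^sup>2 + (dist b d)\<^sup>2
           \<le> (dist a b)\<^sup>2 + (dist b c)\<^sup>2 + (dist c d)\<^sup>2 + (dist d (a::'a))\<^sup>2"
proof -
  define m where "m = geo_comb (1/2) a c"
  have bm: "(dist b m)\<^sup>2 \<le> (dist b a)\<^sup>2 / 2 + (dist b c)\<^sup>2 / 2 - (dist a c)\<^sup>2 / 4"
    using CAT0_geo_comb_ineq[OF C, of "1/2" b a c] unfolding m_def by simp
  have dm: "(dist d m)\<^sup>2 \<le> (dist d a)\<^sup>2 / 2 + (dist d c)\<^sup>2 / 2 - (dist a c)\<^sup>2 / 4"
    using CAT0_geo_comb_ineq[OF C, of "1/2" d a c] unfolding m_def by simp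
  have "(dist b d)\<^sup>2 \<le> (dist b m + dist d m)\<^sup>2"
    using dist_triangle[of b d m] by (intro power_mono) (simp_all add: dist_commute)
  also have "\<dots> \<le> 2 * (dist b m)\<^sup>2 + 2 * (dist d m)\<^sup>2"
    using zero_le_power2[of "dist b m - dist d m"] by (simp add: power2_eq_square algebra_simps)
  finally show ?thesis using bm dm by (simp add: dist_commute)
qed

subsection \<open>Convex functions\<close>

lemma geo_convex_finite:
  assumes "geo_convex f" "proper_fun f" "f x = ereal a" "f y = ereal b" "0 \<le> t" "t \<le> 1"
  obtains c where "f (geo_comb t x y) = ereal c" "c \<le> (1 - t) * a + t * b"
proof -
  have le: "f (geo_comb t x y) \<le> ereal ((1 - t) * a + t * b)"
    using assms(1,3-6) unfolding geo_convex_def by (metis times_ereal.simps(1) plus_ereal.simps(1))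
  have "f (geo_comb t x y) \<noteq> -\<infinity>" using assms(2) unfolding proper_fun_def by blast
  then show ?thesis using le that by (cases "f (geo_comb t x y)") auto
qed

lemma proper_geo_convex_lsc_lower_bound:
  assumes C: "CAT0 TYPE('a::metric_space)" and cv: "geo_convex f" and pr: "proper_fun f"
    and ls: "lsc f" and z0: "f z0 = ereal a0"
  obtains K where "K \<ge> 0" "\<And>y b. f y = ereal b \<Longrightarrow> a0 - 1 - K * dist z0 (y::'a) \<le> b"
proof -
  have "\<forall>\<^sub>F y in nhds z0. ereal (a0 - 1) < f y" using ls z0 unfolding lsc_def by simp
  then obtain d where d: "d > 0" "\<And>y. dist y z0 < d \<Longrightarrow> ereal (a0 - 1) < f y"
    unfolding eventually_nhds_metric by blast
  have "a0 - 1 - (2 / d) * dist z0 y \<le> b" if fy: "f y = ereal b" for y b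
  proof (cases "dist z0 y < d")
    case True
    then have "a0 - 1 < b" using d(2)[of y] fy by (simp add: dist_commute)
    moreover have "0 \<le> (2 / d) * dist z0 y" using d by simp
    ultimately show ?thesis by linarith
  next
    case False
    define t where "t = d / (2 * dist z0 y)"
    have D: "d \<le> dist z0 y" "dist z0 y > 0" using d False by auto
    have t: "0 < t" "t \<le> 1" using d D by (simp_all add: t_def field_simps)
    define w where "w = geo_comb t z0 y"
    have "dist w z0 = d / 2"
      using dist_geo_comb_left[OF C, of t z0 y] t D by (simp add: w_def t_def dist_commute)
    then have lt: "ereal (a0 - 1) < f w" using d by simp
    obtain c where "f w = ereal c" "c \<le> (1 - t) * a0 + t * b"
      using geo_convex_finite[OF cv pr z0 fy, of t] t unfolding w_def by auto
    with lt have "t * (a0 - b) < 1" by (simp add: algebra_simps)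
    then have "a0 - b < 1 / t" using t by (simp add: field_simps)
    also have "1 / t = (2 / d) * dist z0 y" using d False by (simp add: t_def)
    finally show ?thesis by simp
  qed
  then show ?thesis using that[of "2 / d"] d by simp
qed

lemma lsc_LIMSEQ_le:
  assumes "lsc f" "ys \<longlonglongrightarrow> y" "\<And>n. f (ys n) \<le> ereal (c n)" "c \<longlonglongrightarrow> L"
  shows "f y \<le> ereal L"
proof (rule ccontr)
  assume "\<not> f y \<le> ereal L"
  then have "ereal L < f y" by simp
  then obtain c' where "ereal L < ereal c'" "ereal c' < f y" using ereal_dense2 by blast
  then have c': "L < c'" "ereal c' < f y" by simp_all
  have "\<forall>\<^sub>F n in sequentially. ereal c' < f (ys n)"
    using assms(1,2) c'(2) unfolding lsc_def filterlim_iff by blast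
  moreover have "\<forall>\<^sub>F n in sequentially. c n < c'" using order_tendstoD(2)[OF assms(4) c'(1)] .
  ultimately have "\<forall>\<^sub>F n in sequentially. False"
  proof eventually_elim
    case (elim n)
    have "ereal c' < ereal (c n)" using elim(1) assms(3)[of n] by (rule less_le_trans)
    then show False using elim(2) by simp
  qed
  then show False by simp
qed

subsection \<open>Proximal points\<close>

definition prox_minimizer :: "('a::metric_space \<Rightarrow> ereal) \<Rightarrow> real \<Rightarrow> 'a \<Rightarrow> 'a \<Rightarrow> bool" where
  "prox_minimizer f gam x u \<longleftrightarrow> (\<forall>z. f u + ereal ((dist x u)\<^sup>2 / (2 * gam))
                                       \<le> f z + ereal ((dist x z)\<^sup>2 / (2 * gam)))"

lemma prox_minimizer_finite:
  assumes pr: "proper_fun f" and m: "prox_minimizer f gam x u"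
  obtains a where "f u = ereal a"
proof -
  obtain z0 where z0: "f z0 \<noteq> \<infinity>" using pr unfolding proper_fun_def by blast
  have "f u + ereal ((dist x u)\<^sup>2 / (2 * gam)) \<le> f z0 + ereal ((dist x z0)\<^sup>2 / (2 * gam))"
    using m unfolding prox_minimizer_def by blast
  with z0 have "f u \<noteq> \<infinity>" by auto
  moreover have "f u \<noteq> -\<infinity>" using pr unfolding proper_fun_def by blast
  ultimately show ?thesis using that by (cases "f u") auto
qed

lemma prox_minimizer_real:
  assumes "prox_minimizer f gam x u" "gam > 0" "f u = ereal a" "f z = ereal b"
  shows "2 * gam * a + (dist x u)\<^sup>2 \<le> 2 * gam * b + (dist x z)\<^sup>2"
proof -
  have "a + (dist x u)\<^sup>2 / (2 * gam) \<le> b + (dist x z)\<^sup>2 / (2 * gam)"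
    using assms unfolding prox_minimizer_def by (metis plus_ereal.simps(1) ereal_less_eq(3))
  from mult_left_mono[OF this, of "2 * gam"] show ?thesis
    using assms(2) by (simp add: distrib_left)
qed

lemma prox_minimizer_realI:
  assumes pr: "proper_fun f" and gam: "gam > 0" and fu: "f u = ereal a"
    and le: "\<And>z b. f z = ereal b \<Longrightarrow> 2 * gam * a + (dist x u)\<^sup>2 \<le> 2 * gam * b + (dist x z)\<^sup>2"
  shows "prox_minimizer f gam x u"
  unfolding prox_minimizer_def
proof
  fix z
  show "f u + ereal ((dist x u)\<^sup>2 / (2 * gam)) \<le> f z + ereal ((dist x z)\<^sup>2 / (2 * gam))"
  proof (cases "f z")
    case (real b)
    have "(2 * gam * a + (dist x u)\<^sup>2) / (2 * gam) \<le> (2 * gam * b + (dist x z)\<^sup>2) / (2 * gam)"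
      using le[OF real] gam by (simp add: divide_right_mono)
    then show ?thesis using fu real gam by (simp add: add_divide_distrib)
  qed (use fu pr in \<open>auto simp: proper_fun_def\<close>)
qed

lemma prox_minimizer_variational_ineq:
  assumes C: "CAT0 TYPE('a::metric_space)" and cv: "geo_convex f" and pr: "proper_fun f"
    and gam: "gam > 0" and m: "prox_minimizer f gam x u"
    and fu: "f u = ereal a" and fz: "f z = ereal b"
  shows "2 * gam * a + (dist x u)\<^sup>2 + (dist u z)\<^sup>2 - (dist x (z::'a))\<^sup>2 \<le> 2 * gam * b"
proof (rule field_le_epsilon)
  fix e :: real assume e: "e > 0"
  define D W X where "D = dist x u" and "W = dist u z" and "X = dist x z"
  define t where "t = min 1 (e / (W\<^sup>2 + 1))"
  have W1: "W\<^sup>2 + 1 > 0" by (simp add: add_nonneg_pos)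
  have t: "0 < t" "t \<le> 1" using e W1 by (auto simp: t_def)
  have tW: "t * W\<^sup>2 \<le> e"
  proof -
    have "t * W\<^sup>2 \<le> e / (W\<^sup>2 + 1) * W\<^sup>2"
      using mult_right_mono[of t "e / (W\<^sup>2 + 1)" "W\<^sup>2"] by (simp add: t_def)
    also have "\<dots> \<le> e" using e W1 by (simp add: field_simps)
    finally show ?thesis .
  qed
  define w where "w = geo_comb t u z"
  obtain c where c: "f w = ereal c" "c \<le> (1 - t) * a + t * b"
    using geo_convex_finite[OF cv pr fu fz, of t] t unfolding w_def by auto
  have "2 * gam * a + D\<^sup>2 \<le> 2 * gam * c + (dist x w)\<^sup>2"
    using prox_minimizer_real[OF m gam fu c(1)] by (simp add: D_def)
  also have "\<dots> \<le> 2 * gam * ((1 - t) * a + t * b) + ((1 - t) * D\<^sup>2 + t * X\<^sup>2 - t * (1 - t) * W\<^sup>2)"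
    using CAT0_geo_comb_ineq[OF C, of t x u z] c(2) gam t
    by (intro add_mono mult_left_mono) (auto simp: w_def D_def X_def W_def)
  finally have "t * (2 * gam * a + D\<^sup>2 + W\<^sup>2 - X\<^sup>2) \<le> t * (2 * gam * b + t * W\<^sup>2)"
    by (simp add: algebra_simps power2_eq_square)
  then have "2 * gam * a + D\<^sup>2 + W\<^sup>2 - X\<^sup>2 \<le> 2 * gam * b + t * W\<^sup>2" using t by simp
  then show "2 * gam * a + (dist x u)\<^sup>2 + (dist u z)\<^sup>2 - (dist x z)\<^sup>2 \<le> 2 * gam * b + e"
    using tW by (simp add: D_def W_def X_def)
qed

text \<open>At the midpoint of \<open>y1\<close> and \<open>y2\<close> the objective \<open>2\<gamma> f + d(x, \<cdot>)\<^sup>2\<close> is at most the mean of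
  its values at \<open>y1\<close> and \<open>y2\<close> minus \<open>d(y1, y2)\<^sup>2/4\<close>.\<close>
lemma prox_near_minimizers_close:
  assumes C: "CAT0 TYPE('a::metric_space)" and cv: "geo_convex f" and pr: "proper_fun f"
    and gam: "gam > 0"
    and inf: "\<And>y b. f y = ereal b \<Longrightarrow> \<mu> \<le> 2 * gam * b + (dist x y)\<^sup>2"
    and f1: "f y1 = ereal b1" "2 * gam * b1 + (dist x y1)\<^sup>2 \<le> \<mu> + \<epsilon>"
    and f2: "f y2 = ereal b2" "2 * gam * b2 + (dist x (y2::'a))\<^sup>2 \<le> \<mu> + \<epsilon>'"
  shows "(dist y1 y2)\<^sup>2 \<le> 2 * \<epsilon> + 2 * \<epsilon>'"
proof -
  define m where "m = geo_comb (1/2) y1 y2"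
  obtain c where fm: "f m = ereal c" and c: "c \<le> (1 - 1/2) * b1 + 1/2 * b2"
    using geo_convex_finite[OF cv pr f1(1) f2(1), of "1/2"] unfolding m_def by auto
  have "2 * gam * c \<le> 2 * gam * ((1 - 1/2) * b1 + 1/2 * b2)"
    using c gam by (intro mult_left_mono) auto
  moreover have "(dist x m)\<^sup>2 \<le> (dist x y1)\<^sup>2 / 2 + (dist x y2)\<^sup>2 / 2 - (dist y1 y2)\<^sup>2 / 4"
    using CAT0_geo_comb_ineq[OF C, of "1/2" x y1 y2] unfolding m_def by simp
  ultimately show ?thesis using inf[OF fm] f1(2) f2(2) by (simp add: algebra_simps)
qed

lemma prox_minimizer_unique:
  assumes C: "CAT0 TYPE('a::metric_space)" and cv: "geo_convex f" and pr: "proper_fun f"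
    and gam: "gam > 0" and m1: "prox_minimizer f gam x u1" and m2: "prox_minimizer f gam x (u2::'a)"
  shows "u1 = u2"
proof -
  obtain b1 b2 where f1: "f u1 = ereal b1" and f2: "f u2 = ereal b2"
    using prox_minimizer_finite[OF pr m1] prox_minimizer_finite[OF pr m2] by metis
  have "(dist u1 u2)\<^sup>2 \<le> 2 * 0 + 2 * 0"
    using prox_near_minimizers_close[OF C cv pr gam prox_minimizer_real[OF m1 gam f1] f1 _ f2,
        where \<epsilon> = 0 and \<epsilon>' = 0]
      prox_minimizer_real[OF m2 gam f2 f1] by simp
  then show ?thesis by simp
qed

lemma prox_objective_bdd_below:
  assumes C: "CAT0 TYPE('a::metric_space)" and cv: "geo_convex f" and pr: "proper_fun f"
    and ls: "lsc f" and gam: "gam > 0"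
  shows "bdd_below {2 * gam * b + (dist x y)\<^sup>2 | y b. f (y::'a) = ereal b}"
proof -
  obtain z0 a0 where z0: "f z0 = ereal a0"
    using pr unfolding proper_fun_def by (metis ereal_cases)
  obtain K where K: "K \<ge> 0" "\<And>y b. f y = ereal b \<Longrightarrow> a0 - 1 - K * dist z0 y \<le> b"
    using proper_geo_convex_lsc_lower_bound[OF C cv pr ls z0] by blast
  have "2 * gam * (a0 - 1 - K * dist z0 x) - (gam * K)\<^sup>2 \<le> 2 * gam * b + (dist x y)\<^sup>2"
    if fy: "f y = ereal b" for y b
  proof -
    have "K * dist z0 y \<le> K * dist z0 x + K * dist x y"
      using K(1) dist_triangle[of z0 y x] by (simp add: mult_left_mono flip: distrib_left)
    then have "a0 - 1 - K * dist z0 x - K * dist x y \<le> b" using K(2)[OF fy] by linarith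
    from mult_left_mono[OF this, of "2 * gam"]
    have "2 * gam * (a0 - 1 - K * dist z0 x) - 2 * gam * K * dist x y \<le> 2 * gam * b"
      using gam by (simp add: algebra_simps)
    moreover have "2 * gam * K * dist x y - (gam * K)\<^sup>2 \<le> (dist x y)\<^sup>2"
      using zero_le_power2[of "dist x y - gam * K"] by (simp add: power2_eq_square algebra_simps)
    ultimately show ?thesis by linarith
  qed
  then show ?thesis
    by (intro bdd_belowI[where m = "2 * gam * (a0 - 1 - K * dist z0 x) - (gam * K)\<^sup>2"]) blast
qed

lemma prox_minimizer_exists:
  assumes C: "CAT0 TYPE('a::complete_space)" and cv: "geo_convex f" and pr: "proper_fun f"
    and ls: "lsc f" and gam: "gam > 0"
  shows "\<exists>u. prox_minimizer f gam (x::'a) u"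
proof -
  define S where "S = {2 * gam * b + (dist x y)\<^sup>2 | y b. f y = ereal b}"
  define \<mu> where "\<mu> = Inf S"
  define eps where "eps n = inverse (real (Suc n))" for n
  have bdd: "bdd_below S" using prox_objective_bdd_below[OF C cv pr ls gam] unfolding S_def .
  have inf: "\<mu> \<le> 2 * gam * b + (dist x y)\<^sup>2" if "f y = ereal b" for y b
    using cInf_lower[OF _ bdd] that unfolding \<mu>_def S_def by blast
  obtain z0 a0 where "f z0 = ereal a0" using pr unfolding proper_fun_def by (metis ereal_cases)
  then have "S \<noteq> {}" unfolding S_def by blast
  then have "\<exists>y b. f y = ereal b \<and> 2 * gam * b + (dist x y)\<^sup>2 < \<mu> + eps n" for n
    using cInf_lessD[of S "\<mu> + eps n"] unfolding \<mu>_def S_def eps_def by auto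
  then obtain ys bs where ys: "\<And>n. f (ys n) = ereal (bs n)"
    and ys_obj: "\<And>n. 2 * gam * bs n + (dist x (ys n))\<^sup>2 < \<mu> + eps n"
    by metis
  have close: "(dist (ys m) (ys n))\<^sup>2 \<le> 4 * eps k" if "k \<le> m" "k \<le> n" for k m n
  proof -
    have "eps m \<le> eps k" "eps n \<le> eps k"
      using that by (simp_all add: eps_def le_imp_inverse_le)
    moreover have "(dist (ys m) (ys n))\<^sup>2 \<le> 2 * eps m + 2 * eps n"
      using prox_near_minimizers_close[OF C cv pr gam inf ys _ ys] ys_obj less_imp_le by blast
    ultimately show ?thesis by linarith
  qed
  have "Cauchy ys"
  proof (rule metric_CauchyI)
    fix e :: real assume e: "e > 0"
    obtain k :: nat where "4 / e\<^sup>2 < real k" using reals_Archimedean2 by blast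
    then have "4 / e\<^sup>2 < real (Suc k)" by simp
    then have "4 * eps k < e\<^sup>2" using e by (simp add: eps_def field_simps)
    then have "dist (ys m) (ys n) < e" if "k \<le> m" "k \<le> n" for m n
      using close[OF that] e by (smt (verit) power_mono zero_le_dist)
    then show "\<exists>k. \<forall>m\<ge>k. \<forall>n\<ge>k. dist (ys m) (ys n) < e" by blast
  qed
  then obtain y where lim: "ys \<longlonglongrightarrow> y" using Cauchy_convergent convergent_def by blast
  have "(\<lambda>n. (\<mu> + eps n - (dist x (ys n))\<^sup>2) / (2 * gam)) \<longlonglongrightarrow> (\<mu> + 0 - (dist x y)\<^sup>2) / (2 * gam)"
    unfolding eps_def using gam
    by (intro tendsto_divide tendsto_diff tendsto_add tendsto_power tendsto_dist
        tendsto_const LIMSEQ_inverse_real_of_nat lim) auto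
  then have bound_lim: "(\<lambda>n. (\<mu> + eps n - (dist x (ys n))\<^sup>2) / (2 * gam))
                          \<longlonglongrightarrow> (\<mu> - (dist x y)\<^sup>2) / (2 * gam)"
    by simp
  have "f (ys n) \<le> ereal ((\<mu> + eps n - (dist x (ys n))\<^sup>2) / (2 * gam))" for n
    using ys[of n] ys_obj[of n] gam by (simp add: pos_le_divide_eq algebra_simps)
  then have "f y \<le> ereal ((\<mu> - (dist x y)\<^sup>2) / (2 * gam))"
    by (rule lsc_LIMSEQ_le[OF ls lim _ bound_lim])
  moreover have "f y \<noteq> -\<infinity>" using pr unfolding proper_fun_def by blast
  ultimately obtain a where fy: "f y = ereal a" and "a \<le> (\<mu> - (dist x y)\<^sup>2) / (2 * gam)"
    by (cases "f y") auto
  then have "2 * gam * a + (dist x y)\<^sup>2 \<le> \<mu>" using gam by (simp add: pos_le_divide_eq algebra_simps)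
  then have "prox_minimizer f gam x y"
    using prox_minimizer_realI[OF pr gam fy] inf order_trans by blast
  then show ?thesis by blast
qed

lemma resolvent_prox_minimizer:
  assumes C: "CAT0 TYPE('a::complete_space)" and cv: "geo_convex f" and pr: "proper_fun f"
    and ls: "lsc f" and gam: "gam > 0"
  shows "prox_minimizer f gam x (resolvent f gam (x::'a))"
proof -
  have "resolvent f gam x = (THE u. prox_minimizer f gam x u)"
    unfolding resolvent_def prox_minimizer_def ..
  moreover have "\<exists>!u. prox_minimizer f gam x u"
    using prox_minimizer_exists[OF assms] prox_minimizer_unique[OF C cv pr gam] by blast
  ultimately show ?thesis by (simp add: theI')
qed

lemma prox_minimizer_resolvent_identity:
  assumes C: "CAT0 TYPE('a::metric_space)" and cv: "geo_convex f" and pr: "proper_fun f"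
    and gam: "gam > 0" and m: "prox_minimizer f gam x u" and \<alpha>: "0 \<le> \<alpha>" "\<alpha> < 1"
  shows "prox_minimizer f ((1 - \<alpha>) * gam) (geo_comb \<alpha> x u) (u::'a)"
proof -
  obtain a where fu: "f u = ereal a" using prox_minimizer_finite[OF pr m] by blast
  define p s where "p = geo_comb \<alpha> x u" and "s = 1 - \<alpha>"
  have s: "0 < s" "s \<le> 1" using \<alpha> by (auto simp: s_def)
  have dxp: "dist x p = (1 - s) * dist x u" and dpu: "dist p u = s * dist x u"
    using dist_geo_comb_left[OF C, of \<alpha> x u] dist_geo_comb_right[OF C, of \<alpha> x u] \<alpha>
    by (simp_all add: p_def s_def)
  have "2 * (s * gam) * a + (dist p u)\<^sup>2 \<le> 2 * (s * gam) * b + (dist p z)\<^sup>2"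
    if fz: "f z = ereal b" for z b
  proof -
    define D W X r where "D = dist x u" and "W = dist u z" and "X = dist x z" and "r = dist p z"
    have VI: "2 * gam * a + D\<^sup>2 + W\<^sup>2 - X\<^sup>2 \<le> 2 * gam * b"
      using prox_minimizer_variational_ineq[OF C cv pr gam m fu fz] by (simp add: D_def W_def X_def)
    have "X \<le> (1 - s) * D + r" using dist_triangle[of x z p] dxp by (simp add: D_def X_def r_def)
    then have X: "X\<^sup>2 \<le> ((1 - s) * D + r)\<^sup>2" by (simp add: power_mono X_def)
    have "\<bar>r - s * D\<bar> \<le> W"
      using dist_triangle[of p z u] dist_triangle[of p u z] dpu
      by (simp add: abs_le_iff dist_commute D_def W_def r_def)
    then have W: "(r - s * D)\<^sup>2 \<le> W\<^sup>2" by (metis abs_ge_zero power2_abs power_mono)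
    have "s * (2 * gam * a + D\<^sup>2 + W\<^sup>2 - X\<^sup>2) \<le> s * (2 * gam * b)"
      using VI s by (simp add: mult_left_mono)
    moreover have "s * ((1 - s) * D + r)\<^sup>2 - s * (r - s * D)\<^sup>2 - s * (1 - s) * D\<^sup>2
                     = r\<^sup>2 - (r - s * D)\<^sup>2"
      by algebra
    ultimately have "2 * (s * gam) * a + (s * D)\<^sup>2 \<le> 2 * (s * gam) * b + r\<^sup>2"
      using mult_left_mono[OF X, of s] mult_left_mono[OF W, of s] s zero_le_power2[of "r - s * D"]
      by (simp add: algebra_simps power2_eq_square)
    then show ?thesis by (simp add: dpu D_def r_def)
  qed
  then show ?thesis
    using prox_minimizer_realI[OF pr _ fu] gam s by (simp add: p_def s_def)
qed

lemma prox_minimizer_nonexpansive: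
  assumes C: "CAT0 TYPE('a::metric_space)" and cv: "geo_convex f" and pr: "proper_fun f"
    and gam: "gam > 0" and mu: "prox_minimizer f gam p u" and mv: "prox_minimizer f gam q (v::'a)"
  shows "dist u v \<le> dist p q"
proof -
  obtain a b where fu: "f u = ereal a" and fv: "f v = ereal b"
    using prox_minimizer_finite[OF pr mu] prox_minimizer_finite[OF pr mv] by metis
  have "(dist u v)\<^sup>2 \<le> (dist p q)\<^sup>2"
    using prox_minimizer_variational_ineq[OF C cv pr gam mu fu fv]
      prox_minimizer_variational_ineq[OF C cv pr gam mv fv fu]
      CAT0_quadrilateral_ineq[OF C, of p v q u]
    unfolding dist_commute[of v u] dist_commute[of u p] by linarith
  then show ?thesis by (rule power2_le_imp_le) simp
qed

theorem proposition3p17: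
  fixes f :: "'a::complete_space \<Rightarrow> ereal" and gam :: "nat \<Rightarrow> real"
  assumes "CAT0 TYPE('a)"
    and "geo_convex f" and "proper_fun f" and "lsc f"
    and "\<And>n. gam n > 0"
  shows "jointly_firmly_nonexpansive (\<lambda>n. resolvent f (gam n)) gam"
  unfolding jointly_firmly_nonexpansive_def
proof (intro allI impI)
  note C = assms(1) and cv = assms(2) and pr = assms(3) and gp = assms(5)
  fix n m x y \<alpha> \<beta>
  assume H: "0 \<le> \<alpha> \<and> \<alpha> \<le> 1 \<and> 0 \<le> \<beta> \<and> \<beta> \<le> 1 \<and> (1 - \<alpha>) * gam n = (1 - \<beta>) * gam m"
  define u v where "u = resolvent f (gam n) x" and "v = resolvent f (gam m) y"
  have mu: "prox_minimizer f (gam n) x u" and mv: "prox_minimizer f (gam m) y v"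
    using resolvent_prox_minimizer[OF assms(1-4) gp] by (simp_all add: u_def v_def)
  show "dist u v \<le> dist (geo_comb \<alpha> x u) (geo_comb \<beta> y v)"
  proof (cases "\<alpha> = 1")
    case True
    then have "\<beta> = 1" using H gp[of m] by simp
    with True show ?thesis by (simp add: CAT0_geo_comb_one[OF C])
  next
    case False
    then have "\<alpha> < 1" "\<beta> < 1" using H gp[of n] gp[of m] by (auto simp: le_less)
    have order_eq: "(1 - \<alpha>) * gam n = (1 - \<beta>) * gam m" using H by simp
    have "prox_minimizer f ((1 - \<alpha>) * gam n) (geo_comb \<alpha> x u) u"
      using prox_minimizer_resolvent_identity[OF C cv pr gp mu] H \<open>\<alpha> < 1\<close> by blast
    moreover have "prox_minimizer f ((1 - \<alpha>) * gam n) (geo_comb \<beta> y v) v"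
      unfolding order_eq using prox_minimizer_resolvent_identity[OF C cv pr gp mv] H \<open>\<beta> < 1\<close> by blast
    moreover have "(1 - \<alpha>) * gam n > 0" using \<open>\<alpha> < 1\<close> gp[of n] by simp
    ultimately show ?thesis using prox_minimizer_nonexpansive[OF C cv pr] by blast
  qed
qed

end
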